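(* Let $R_V>0$ and $\delta\in(0,1)$. (1) For any fixed $x\in\mathbb{R}^d$, with probability at least $1-3\delta$, every $V\in\mathbb{R}^{m\times d}$ satisfies \[ |\langle\nabla f(x;W_0),V\rangle|\le\rho\|x\|\big(\|V-W_0\|+2\ln(1/\delta)\big). \] (2) Suppose $R_V\ge1$ and $m\ge\ln(emd)$. With probability at least $1-(1+3(md^{3/2})^d)\delta$, \[ \sup_{\|V-W_0\|\le R_V}\ \sup_{\|x\|\le1}|\langle\nabla f(x;W_0),V\rangle|\le18R_V\rho\ln(emd/\delta). \]
   Context: Network: width $m$, temperature $\rho>0$, $a_1,\dots,a_m$ i.i.d. uniform in $\{\pm1\}$, $W_0\in\mathbb{R}^{m\times d}$ with i.i.d. $\mathcal N(0,1)$ entries, independent of $a$. For $W$ with rows $w_j^\top$, $\nabla f(x;W)=\frac{\rho}{\sqrt m}\sum_ja_j\mathbf 1[w_j^\top x\ge0]e_jx^\top$. $\langle A,B\rangle=\mathrm{tr}(A^\top B)$, $\|\cdot\|$ Frobenius/Euclidean norm. Probabilities are over $a$ and $W_0$. *)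

theory Defs
  imports "HOL-Probability.Probability"
begin

text \<open>Vectors/matrices are
  functions on indices; only indices j < m, k < d are relevant.\<close>

definition rademacher_vec :: "nat \<Rightarrow> (nat \<Rightarrow> real) measure" where
  "rademacher_vec m = PiM {..<m} (\<lambda>_. measure_pmf (pmf_of_set {-1, 1::real}))"

definition gauss_mat :: "nat \<Rightarrow> nat \<Rightarrow> (nat \<times> nat \<Rightarrow> real) measure" where
  "gauss_mat m d = PiM ({..<m} \<times> {..<d}) (\<lambda>_. std_normal_distribution)"

definition init_measure :: "nat \<Rightarrow> nat \<Rightarrow> ((nat \<Rightarrow> real) \<times> (nat \<times> nat \<Rightarrow> real)) measure" where
  "init_measure m d = rademacher_vec m \<Otimes>\<^sub>M gauss_mat m d"

definition fro_norm :: "nat \<Rightarrow> nat \<Rightarrow> (nat \<times> nat \<Rightarrow> real) \<Rightarrow> real" where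
  "fro_norm m d V = sqrt (\<Sum>j<m. \<Sum>k<d. (V (j, k))\<^sup>2)"

definition vec_norm :: "nat \<Rightarrow> (nat \<Rightarrow> real) \<Rightarrow> real" where
  "vec_norm d x = sqrt (\<Sum>k<d. (x k)\<^sup>2)"

definition grad_f :: "real \<Rightarrow> nat \<Rightarrow> nat \<Rightarrow> (nat \<Rightarrow> real) \<Rightarrow> (nat \<times> nat \<Rightarrow> real)
    \<Rightarrow> (nat \<Rightarrow> real) \<Rightarrow> (nat \<times> nat \<Rightarrow> real)" where
  "grad_f \<rho> m d a W x = (\<lambda>(j, k). \<rho> / sqrt (real m) * a j *
      (if (\<Sum>i<d. W (j, i) * x i) \<ge> 0 then 1 else 0) * x k)"

definition frob_inner :: "nat \<Rightarrow> nat \<Rightarrow> (nat \<times> nat \<Rightarrow> real) \<Rightarrow> (nat \<times> nat \<Rightarrow> real) \<Rightarrow> real" where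
  "frob_inner m d A B = (\<Sum>j<m. \<Sum>k<d. A (j, k) * B (j, k))"

end

theory Submission
  imports Defs
begin

text \<open>
  Write \<open>g = \<nabla>f(x;W\<^sub>0)\<close>. Then \<open>\<langle>g, V\<rangle> = \<langle>g, V - W\<^sub>0\<rangle> + \<langle>g, W\<^sub>0\<rangle>\<close>, where \<open>\<parallel>g\<parallel> \<le> \<rho> \<parallel>x\<parallel>\<close> and,
  by positive homogeneity of the ReLU, \<open>\<langle>g, W\<^sub>0\<rangle> = \<rho> / sqrt m * \<Sum>\<^sub>j a\<^sub>j max (w\<^sub>j \<bullet> x) 0\<close>.
  Conditionally on \<open>W\<^sub>0\<close> the random signs make this sum sub-Gaussian, and since
  \<open>cosh (max t 0) \<le> cosh t\<close> its moment generating function is dominated by that of the Gaussian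
  \<open>\<Sum>\<^sub>j a\<^sub>j (w\<^sub>j \<bullet> x)\<close>, whose variance is \<open>m \<parallel>x\<parallel>\<^sup>2\<close>. A Chernoff bound gives (1).

  For (2), the supremum over the ball \<open>\<parallel>V - W\<^sub>0\<parallel> \<le> R\<close> is \<open>\<bar>\<langle>g, W\<^sub>0\<rangle>\<bar> + R \<parallel>g\<parallel>\<close>. The ReLU sum is
  controlled on a grid of mesh \<open>1/K\<close>, \<open>K \<approx> sqrt m * d / 5\<close>, by a union bound, and transferred to
  the whole unit ball because it is Lipschitz in \<open>x\<close> with constant \<open>\<Sum> \<bar>W\<^sub>0\<bar>\<close>, whose entries are
  bounded by a second union bound. The event in (2) quantifies over uncountably many \<open>V\<close> and \<open>x\<close>;
  it is measurable because on each of the finitely many activation patterns the supremum is a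
  continuous function of \<open>x\<close> on a compact set, so the event is described by countably many
  conditions at grid points.
\<close>

section \<open>Frobenius geometry\<close>

lemma frob_inner_eq_sum: "frob_inner m d A B = (\<Sum>p\<in>{..<m} \<times> {..<d}. A p * B p)"
  unfolding frob_inner_def by (simp add: sum.cartesian_product split_def)

lemma fro_norm_eq_L2_set: "fro_norm m d V = L2_set V ({..<m} \<times> {..<d})"
  unfolding fro_norm_def L2_set_def by (simp add: sum.cartesian_product split_def)

lemma fro_norm_nonneg: "0 \<le> fro_norm m d V"
  unfolding fro_norm_eq_L2_set by (rule L2_set_nonneg)

lemma abs_frob_inner_le: "\<bar>frob_inner m d A B\<bar> \<le> fro_norm m d A * fro_norm m d B"
proof -
  have "\<bar>frob_inner m d A B\<bar> \<le> (\<Sum>p\<in>{..<m} \<times> {..<d}. \<bar>A p\<bar> * \<bar>B p\<bar>)"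
    unfolding frob_inner_eq_sum by (rule order_trans[OF sum_abs]) (simp add: abs_mult)
  also have "\<dots> \<le> fro_norm m d A * fro_norm m d B"
    unfolding fro_norm_eq_L2_set by (rule L2_set_mult_ineq)
  finally show ?thesis .
qed

lemma frob_inner_self: "frob_inner m d A A = (fro_norm m d A)\<^sup>2"
  unfolding frob_inner_eq_sum fro_norm_eq_L2_set L2_set_def by (simp add: power2_eq_square sum_nonneg)

lemma fro_norm_scale: "fro_norm m d (\<lambda>p. t * A p) = \<bar>t\<bar> * fro_norm m d A"
  unfolding fro_norm_def by (simp add: power_mult_distrib sum_distrib_left[symmetric] real_sqrt_mult)

lemma frob_inner_shift:
  "frob_inner m d g (\<lambda>p. W p + t * g p) = frob_inner m d g W + t * (fro_norm m d g)\<^sup>2"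
  unfolding frob_inner_self[symmetric] frob_inner_eq_sum
  by (simp add: distrib_left sum.distrib sum_distrib_left mult_ac)

lemma abs_frob_inner_le_dist:
  "\<bar>frob_inner m d g V\<bar> \<le> fro_norm m d g * fro_norm m d (\<lambda>jk. V jk - W jk) + \<bar>frob_inner m d g W\<bar>"
proof -
  have "frob_inner m d g V = frob_inner m d g (\<lambda>jk. V jk - W jk) + frob_inner m d g W"
    unfolding frob_inner_eq_sum by (simp add: right_diff_distrib sum_subtractf)
  then show ?thesis
    using abs_frob_inner_le[of m d g "\<lambda>jk. V jk - W jk"] by linarith
qed

lemma frob_inner_le_affine_dist_iff:
  assumes P: "0 \<le> P" and c: "0 \<le> c"
  shows "(\<forall>V. \<bar>frob_inner m d g V\<bar> \<le> P * (fro_norm m d (\<lambda>jk. V jk - W jk) + c))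
     \<longleftrightarrow> fro_norm m d g \<le> P \<and> \<bar>frob_inner m d g W\<bar> \<le> P * c"
proof
  assume bound: "\<forall>V. \<bar>frob_inner m d g V\<bar> \<le> P * (fro_norm m d (\<lambda>jk. V jk - W jk) + c)"
  define N where "N = fro_norm m d g"
  have "\<bar>frob_inner m d g W\<bar> \<le> P * c"
    using bound[rule_format, of W] by (simp add: fro_norm_def)
  moreover have "N \<le> P"
  proof (rule ccontr)
    assume "\<not> N \<le> P"
    then have NP: "P < N" and N: "0 < N" using P by auto
    define t where "t = (\<bar>frob_inner m d g W\<bar> + P * c + 1) / (N * (N - P))"
    have t: "0 < t" and tN: "t * N * (N - P) = \<bar>frob_inner m d g W\<bar> + P * c + 1"
      unfolding t_def using NP N P c by (auto intro!: divide_pos_pos add_nonneg_pos)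
    have "frob_inner m d g W + t * N\<^sup>2 \<le> P * (t * N + c)"
      using bound[rule_format, of "\<lambda>p. W p + t * g p"] t
      by (simp add: frob_inner_shift fro_norm_scale N_def)
    then show False using tN by (simp add: algebra_simps power2_eq_square)
  qed
  ultimately show "fro_norm m d g \<le> P \<and> \<bar>frob_inner m d g W\<bar> \<le> P * c"
    unfolding N_def by simp
next
  assume g: "fro_norm m d g \<le> P \<and> \<bar>frob_inner m d g W\<bar> \<le> P * c"
  show "\<forall>V. \<bar>frob_inner m d g V\<bar> \<le> P * (fro_norm m d (\<lambda>jk. V jk - W jk) + c)"
  proof
    fix V
    have "fro_norm m d g * fro_norm m d (\<lambda>jk. V jk - W jk) \<le> P * fro_norm m d (\<lambda>jk. V jk - W jk)"
      using g by (intro mult_right_mono fro_norm_nonneg) simp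
    then show "\<bar>frob_inner m d g V\<bar> \<le> P * (fro_norm m d (\<lambda>jk. V jk - W jk) + c)"
      using abs_frob_inner_le_dist[of m d g V W] g by (simp add: distrib_left)
  qed
qed

lemma frob_inner_le_on_ball_iff:
  assumes R: "0 < R"
  shows "(\<forall>V. fro_norm m d (\<lambda>jk. V jk - W jk) \<le> R \<longrightarrow> \<bar>frob_inner m d g V\<bar> \<le> C)
     \<longleftrightarrow> \<bar>frob_inner m d g W\<bar> + R * fro_norm m d g \<le> C"
proof
  assume bound: "\<forall>V. fro_norm m d (\<lambda>jk. V jk - W jk) \<le> R \<longrightarrow> \<bar>frob_inner m d g V\<bar> \<le> C"
  define N where "N = fro_norm m d g"
  show "\<bar>frob_inner m d g W\<bar> + R * fro_norm m d g \<le> C"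
  proof (cases "N = 0")
    case True
    then show ?thesis using bound[rule_format, of W] R by (simp add: fro_norm_def N_def)
  next
    case False
    then have N: "0 < N" using fro_norm_nonneg[of m d g] by (simp add: N_def)
    define t where "t = (if 0 \<le> frob_inner m d g W then R / N else - R / N)"
    have "fro_norm m d (\<lambda>jk. W jk + t * g jk - W jk) = \<bar>t\<bar> * N"
      by (simp add: fro_norm_scale N_def)
    also have "\<bar>t\<bar> * N = R"
      using N R by (simp add: t_def)
    finally have "\<bar>frob_inner m d g (\<lambda>p. W p + t * g p)\<bar> \<le> C"
      using bound by simp
    moreover have "\<bar>frob_inner m d g (\<lambda>p. W p + t * g p)\<bar> = \<bar>frob_inner m d g W\<bar> + R * N"
    proof -
      have "t * N\<^sup>2 = (if 0 \<le> frob_inner m d g W then R * N else - (R * N))"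
        using N by (simp add: t_def power2_eq_square)
      then show ?thesis
        unfolding frob_inner_shift N_def[symmetric] using mult_pos_pos[OF R N] by (auto simp: abs_if)
    qed
    ultimately show ?thesis by (simp add: N_def)
  qed
next
  assume g: "\<bar>frob_inner m d g W\<bar> + R * fro_norm m d g \<le> C"
  show "\<forall>V. fro_norm m d (\<lambda>jk. V jk - W jk) \<le> R \<longrightarrow> \<bar>frob_inner m d g V\<bar> \<le> C"
  proof (intro allI impI)
    fix V assume "fro_norm m d (\<lambda>jk. V jk - W jk) \<le> R"
    then have "fro_norm m d g * fro_norm m d (\<lambda>jk. V jk - W jk) \<le> R * fro_norm m d g"
      by (subst mult.commute) (intro mult_right_mono fro_norm_nonneg)
    then show "\<bar>frob_inner m d g V\<bar> \<le> C"
      using abs_frob_inner_le_dist[of m d g V W] g by linarith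
  qed
qed

section \<open>Moment generating functions\<close>

lemma prob_space_std_normal_distribution: "prob_space std_normal_distribution"
  using real_dist_normal_dist by (rule real_distribution.axioms)

lemma nn_integral_exp_std_normal:
  "(\<integral>\<^sup>+t. ennreal (exp (c * t)) \<partial>std_normal_distribution) = ennreal (exp (c\<^sup>2 / 2))"
proof -
  have completed_square: "std_normal_density t * exp (c * t) = exp (c\<^sup>2 / 2) * normal_density c 1 t" for t
  proof -
    have "exp (c * t) * exp (- t\<^sup>2 / 2) = exp (c\<^sup>2 / 2) * exp (- (t - c)\<^sup>2 / 2)"
      by (simp add: mult_exp_exp power2_eq_square algebra_simps add_divide_distrib diff_divide_distrib)
    then show ?thesis unfolding normal_density_def by (simp add: algebra_simps)
  qed
  have "(\<integral>\<^sup>+t. ennreal (exp (c * t)) \<partial>std_normal_distribution)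
      = (\<integral>\<^sup>+t. ennreal (exp (c\<^sup>2 / 2)) * ennreal (normal_density c 1 t) \<partial>lborel)"
    by (subst nn_integral_density)
       (auto intro!: nn_integral_cong simp: ennreal_mult'[symmetric] completed_square)
  also have "\<dots> = ennreal (exp (c\<^sup>2 / 2)) * (\<integral>\<^sup>+t. ennreal (normal_density c 1 t) \<partial>lborel)"
    by (rule nn_integral_cmult) auto
  also have "(\<integral>\<^sup>+t. ennreal (normal_density c 1 t) \<partial>lborel) = 1"
    using prob_space.emeasure_space_1[OF prob_space_normal_density[of 1 c]]
    by (simp add: emeasure_density)
  finally show ?thesis by simp
qed

lemma nn_integral_exp_rademacher:
  "(\<integral>\<^sup>+t. ennreal (exp (c * t)) \<partial>measure_pmf (pmf_of_set {-1, 1::real})) = ennreal (cosh c)"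
proof -
  have "(\<integral>\<^sup>+t. ennreal (exp (c * t)) \<partial>measure_pmf (pmf_of_set {-1, 1::real}))
      = (ennreal (exp c) + ennreal (exp (- c))) / ennreal 2"
    by (subst nn_integral_pmf_of_set) (auto simp: add.commute)
  also have "\<dots> = ennreal (exp c + exp (- c)) / ennreal 2"
    by (simp add: ennreal_plus)
  also have "\<dots> = ennreal (cosh c)"
    unfolding cosh_field_def by (rule divide_ennreal) auto
  finally show ?thesis .
qed

lemma nn_integral_exp_sum_PiM:
  assumes "finite I" and "prob_space N" and "(\<lambda>t. t) \<in> borel_measurable N"
  shows "(\<integral>\<^sup>+\<omega>. ennreal (exp (\<Sum>i\<in>I. c i * \<omega> i)) \<partial>PiM I (\<lambda>_. N))
       = (\<Prod>i\<in>I. \<integral>\<^sup>+t. ennreal (exp (c i * t)) \<partial>N)"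
proof -
  interpret product_prob_space "\<lambda>_. N" I
    by (intro product_prob_spaceI assms)
  have "(\<integral>\<^sup>+\<omega>. ennreal (exp (\<Sum>i\<in>I. c i * \<omega> i)) \<partial>PiM I (\<lambda>_. N))
      = (\<integral>\<^sup>+\<omega>. (\<Prod>i\<in>I. (\<lambda>i t. ennreal (exp (c i * t))) i (\<omega> i)) \<partial>PiM I (\<lambda>_. N))"
    by (intro nn_integral_cong) (simp add: exp_sum[OF assms(1)] prod_ennreal)
  also have "\<dots> = (\<Prod>i\<in>I. \<integral>\<^sup>+t. ennreal (exp (c i * t)) \<partial>N)"
    using assms(3) by (intro product_nn_integral_prod[OF assms(1)]) measurable
  finally show ?thesis .
qed

lemma nn_integral_exp_sum_gaussian:
  assumes "finite I"
  shows "(\<integral>\<^sup>+\<omega>. ennreal (exp (\<Sum>i\<in>I. c i * \<omega> i)) \<partial>PiM I (\<lambda>_. std_normal_distribution))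
       = ennreal (exp (\<Sum>i\<in>I. (c i)\<^sup>2 / 2))"
proof -
  have "(\<integral>\<^sup>+\<omega>. ennreal (exp (\<Sum>i\<in>I. c i * \<omega> i)) \<partial>PiM I (\<lambda>_. std_normal_distribution))
      = (\<Prod>i\<in>I. ennreal (exp ((c i)\<^sup>2 / 2)))"
    by (simp add: nn_integral_exp_sum_PiM[OF assms prob_space_std_normal_distribution]
        nn_integral_exp_std_normal measurable_ident_sets)
  also have "\<dots> = ennreal (exp (\<Sum>i\<in>I. (c i)\<^sup>2 / 2))"
    by (simp add: exp_sum[OF assms] prod_ennreal)
  finally show ?thesis .
qed

lemma nn_integral_exp_sum_rademacher:
  assumes "finite I"
  shows "(\<integral>\<^sup>+\<omega>. ennreal (exp (\<Sum>i\<in>I. c i * \<omega> i)) \<partial>PiM I (\<lambda>_. measure_pmf (pmf_of_set {-1, 1::real})))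
       = ennreal (\<Prod>i\<in>I. cosh (c i))"
  by (simp add: nn_integral_exp_sum_PiM[OF assms prob_space_measure_pmf]
      nn_integral_exp_rademacher prod_ennreal)

lemma prob_space_rademacher_vec: "prob_space (rademacher_vec m)"
  unfolding rademacher_vec_def by (intro prob_space_PiM prob_space_measure_pmf)

lemma prob_space_gauss_mat: "prob_space (gauss_mat m d)"
  unfolding gauss_mat_def by (intro prob_space_PiM prob_space_std_normal_distribution)

lemma prob_space_init_measure: "prob_space (init_measure m d)"
  unfolding init_measure_def by (intro prob_space_pair prob_space_rademacher_vec prob_space_gauss_mat)

lemma measurable_init_sign:
  "j < m \<Longrightarrow> (\<lambda>\<omega>. fst \<omega> j) \<in> borel_measurable (init_measure m d)"
  unfolding init_measure_def rademacher_vec_def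
  by (intro measurable_compose[OF measurable_fst] measurable_compose[OF measurable_component_singleton])
     auto

lemma measurable_init_weight:
  "p \<in> {..<m} \<times> {..<d} \<Longrightarrow> (\<lambda>\<omega>. snd \<omega> p) \<in> borel_measurable (init_measure m d)"
  unfolding init_measure_def gauss_mat_def
  by (intro measurable_compose[OF measurable_snd] measurable_compose[OF measurable_component_singleton])
     auto

lemma AE_rademacher_vec_sign: "AE a in rademacher_vec m. \<forall>j<m. \<bar>a j\<bar> = 1"
proof -
  have "AE a in rademacher_vec m. \<bar>a j\<bar> = 1" if "j \<in> {..<m}" for j
    unfolding rademacher_vec_def
    by (rule AE_PiM_component[OF prob_space_measure_pmf that]) (auto simp: AE_measure_pmf_iff)
  then have "AE a in rademacher_vec m. \<forall>j\<in>{..<m}. \<bar>a j\<bar> = 1"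
    by (subst AE_ball_countable) auto
  then show ?thesis by (rule eventually_mono) simp
qed

lemma AE_init_measure_sign: "AE \<omega> in init_measure m d. \<forall>j<m. \<bar>fst \<omega> j\<bar> = 1"
  unfolding init_measure_def
  by (rule AE_distrD[OF measurable_fst])
     (subst prob_space.distr_pair_fst[OF prob_space_gauss_mat], rule AE_rademacher_vec_sign)

lemma vec_norm_nonneg: "0 \<le> vec_norm d x"
  unfolding vec_norm_def by (simp add: sum_nonneg)

lemma vec_norm_eq_0_iff: "vec_norm d x = 0 \<longleftrightarrow> (\<forall>i<d. x i = 0)"
  unfolding vec_norm_def by (auto simp: sum_nonneg_eq_0_iff)

abbreviation preact :: "nat \<Rightarrow> (nat \<times> nat \<Rightarrow> real) \<Rightarrow> nat \<Rightarrow> (nat \<Rightarrow> real) \<Rightarrow> real" where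
  "preact d W j x \<equiv> \<Sum>i<d. W (j, i) * x i"

text \<open>The network output is \<open>f(x;W) = \<rho> / sqrt m * relu_net m d a W x\<close>.\<close>

definition relu_net :: "nat \<Rightarrow> nat \<Rightarrow> (nat \<Rightarrow> real) \<Rightarrow> (nat \<times> nat \<Rightarrow> real) \<Rightarrow> (nat \<Rightarrow> real) \<Rightarrow> real"
  where "relu_net m d a W x = (\<Sum>j<m. a j * max (preact d W j x) 0)"

definition active_units :: "nat \<Rightarrow> nat \<Rightarrow> (nat \<times> nat \<Rightarrow> real) \<Rightarrow> (nat \<Rightarrow> real) \<Rightarrow> nat set" where
  "active_units m d W x = {j \<in> {..<m}. 0 \<le> preact d W j x}"

lemma frob_inner_grad_f_self:
  "frob_inner m d (grad_f \<rho> m d a W x) W = \<rho> / sqrt (real m) * relu_net m d a W x"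
proof -
  define c where "c j = \<rho> / sqrt (real m) * a j * (if 0 \<le> preact d W j x then 1 else 0)" for j
  have "frob_inner m d (grad_f \<rho> m d a W x) W = (\<Sum>j<m. \<Sum>k<d. c j * (W (j, k) * x k))"
    unfolding frob_inner_def grad_f_def c_def by (intro sum.cong refl) (simp add: mult_ac)
  also have "\<dots> = (\<Sum>j<m. c j * preact d W j x)"
    by (simp add: sum_distrib_left)
  also have "\<dots> = (\<Sum>j<m. \<rho> / sqrt (real m) * (a j * max (preact d W j x) 0))"
    unfolding c_def by (intro sum.cong refl) (auto simp: max_def)
  also have "\<dots> = \<rho> / sqrt (real m) * relu_net m d a W x"
    unfolding relu_net_def by (simp add: sum_distrib_left)
  finally show ?thesis .
qed

lemma fro_norm_grad_f:
  assumes "0 \<le> \<rho>"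
  shows "fro_norm m d (grad_f \<rho> m d a W x)
       = \<rho> / sqrt (real m) * vec_norm d x * sqrt (\<Sum>j\<in>active_units m d W x. (a j)\<^sup>2)"
proof -
  have "(\<Sum>k<d. (grad_f \<rho> m d a W x (j, k))\<^sup>2)
      = (\<rho> / sqrt (real m))\<^sup>2 * (\<Sum>k<d. (x k)\<^sup>2) * (if 0 \<le> preact d W j x then (a j)\<^sup>2 else 0)"
    for j
  proof -
    have "(grad_f \<rho> m d a W x (j, k))\<^sup>2
        = (\<rho> / sqrt (real m))\<^sup>2 * (if 0 \<le> preact d W j x then (a j)\<^sup>2 else 0) * (x k)\<^sup>2" for k
      unfolding grad_f_def by (auto simp: power_mult_distrib power_divide)
    then show ?thesis by (simp add: sum_distrib_left mult_ac)
  qed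
  then have "(\<Sum>j<m. \<Sum>k<d. (grad_f \<rho> m d a W x (j, k))\<^sup>2)
      = (\<Sum>j<m. (\<rho> / sqrt (real m))\<^sup>2 * (\<Sum>k<d. (x k)\<^sup>2)
                   * (if 0 \<le> preact d W j x then (a j)\<^sup>2 else 0))"
    by simp
  also have "\<dots> = (\<rho> / sqrt (real m))\<^sup>2 * (\<Sum>k<d. (x k)\<^sup>2)
                    * (\<Sum>j<m. if 0 \<le> preact d W j x then (a j)\<^sup>2 else 0)"
    by (simp add: sum_distrib_left)
  also have "(\<Sum>j<m. if 0 \<le> preact d W j x then (a j)\<^sup>2 else 0) = (\<Sum>j\<in>active_units m d W x. (a j)\<^sup>2)"
    unfolding active_units_def by (rule sum.inter_filter[symmetric]) simp
  finally show ?thesis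
    unfolding fro_norm_def vec_norm_def using assms by (simp add: real_sqrt_mult)
qed

lemma fro_norm_grad_f_le:
  assumes "0 \<le> \<rho>" and "\<forall>j<m. \<bar>a j\<bar> \<le> 1"
  shows "fro_norm m d (grad_f \<rho> m d a W x) \<le> \<rho> * vec_norm d x"
proof (cases "m = 0")
  case True
  then show ?thesis using assms(1) by (simp add: fro_norm_grad_f vec_norm_def sum_nonneg)
next
  case False
  have "(\<Sum>j\<in>active_units m d W x. (a j)\<^sup>2) \<le> (\<Sum>j<m. 1)"
  proof (rule sum_mono2[THEN order_trans])
    show "(\<Sum>j<m. (a j)\<^sup>2) \<le> (\<Sum>j<m. 1)"
      using assms(2) by (intro sum_mono) (simp add: abs_square_le_1)
  qed (auto simp: active_units_def)
  then have "sqrt (\<Sum>j\<in>active_units m d W x. (a j)\<^sup>2) \<le> sqrt (real m)"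
    by simp
  then have "\<rho> / sqrt (real m) * vec_norm d x * sqrt (\<Sum>j\<in>active_units m d W x. (a j)\<^sup>2)
      \<le> \<rho> / sqrt (real m) * vec_norm d x * sqrt (real m)"
    using assms(1) by (intro mult_left_mono) (simp_all add: vec_norm_nonneg)
  then show ?thesis using False assms(1) by (simp add: fro_norm_grad_f)
qed

lemma relu_net_lipschitz:
  assumes "\<forall>j<m. \<bar>a j\<bar> \<le> 1"
  shows "\<bar>relu_net m d a W x - relu_net m d a W y\<bar> \<le> (\<Sum>j<m. \<Sum>i<d. \<bar>W (j, i)\<bar> * \<bar>x i - y i\<bar>)"
proof -
  have "\<bar>relu_net m d a W x - relu_net m d a W y\<bar>
      \<le> (\<Sum>j<m. \<bar>a j\<bar> * \<bar>max (preact d W j x) 0 - max (preact d W j y) 0\<bar>)"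
    unfolding relu_net_def sum_subtractf[symmetric]
    by (rule order_trans[OF sum_abs]) (simp add: right_diff_distrib[symmetric] abs_mult)
  also have "\<dots> \<le> (\<Sum>j<m. \<bar>preact d W j x - preact d W j y\<bar>)"
  proof (intro sum_mono)
    fix j assume "j \<in> {..<m}"
    have "\<bar>max (preact d W j x) 0 - max (preact d W j y) 0\<bar> \<le> \<bar>preact d W j x - preact d W j y\<bar>"
      by (auto simp: max_def)
    then show "\<bar>a j\<bar> * \<bar>max (preact d W j x) 0 - max (preact d W j y) 0\<bar>
        \<le> \<bar>preact d W j x - preact d W j y\<bar>"
      using assms \<open>j \<in> {..<m}\<close> by (intro order_trans[OF mult_left_le_one_le]) auto
  qed
  also have "\<dots> \<le> (\<Sum>j<m. \<Sum>i<d. \<bar>W (j, i)\<bar> * \<bar>x i - y i\<bar>)"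
    by (intro sum_mono)
       (simp add: sum_subtractf[symmetric] right_diff_distrib[symmetric] abs_mult[symmetric] sum_abs)
  finally show ?thesis .
qed

lemma measurable_preact:
  "j < m \<Longrightarrow> (\<lambda>\<omega>. preact d (snd \<omega>) j x) \<in> borel_measurable (init_measure m d)"
  by (intro borel_measurable_sum borel_measurable_times measurable_init_weight measurable_const) auto

lemma measurable_relu_net [measurable]:
  "(\<lambda>\<omega>. relu_net m d (fst \<omega>) (snd \<omega>) x) \<in> borel_measurable (init_measure m d)"
  unfolding relu_net_def
  by (intro borel_measurable_sum borel_measurable_times borel_measurable_max measurable_preact
      measurable_init_sign measurable_const) auto

lemma measurable_signed_preact_sum:
  "(\<lambda>\<omega>. \<Sum>j<m. l * preact d (snd \<omega>) j x * fst \<omega> j) \<in> borel_measurable (init_measure m d)"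
  by (intro borel_measurable_sum borel_measurable_times measurable_preact measurable_init_sign
      measurable_const) auto

section \<open>Sub-Gaussian tails\<close>

lemma (in prob_space) prob_ge_one_minus_bad_event:
  assumes "E \<in> events" and "B \<in> events"
    and "AE \<omega> in M. \<omega> \<notin> B \<longrightarrow> \<omega> \<in> E" and "prob B \<le> p"
  shows "1 - p \<le> prob E"
proof -
  have "prob (space M - B) \<le> prob E"
    using assms(1-3) by (intro finite_measure_mono_AE) (auto elim: eventually_mono)
  then show ?thesis using assms(2,4) by (simp add: prob_compl)
qed

lemma (in prob_space) subgaussian_tail:
  fixes f :: "'a \<Rightarrow> real"
  assumes f[measurable]: "f \<in> borel_measurable M" and \<sigma>: "0 < \<sigma>"
    and mgf: "\<And>l. (\<integral>\<^sup>+\<omega>. ennreal (exp (l * f \<omega>)) \<partial>M) \<le> ennreal (exp (l\<^sup>2 * \<sigma>\<^sup>2 / 2))"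
  shows "prob {\<omega> \<in> space M. c * \<sigma> < \<bar>f \<omega>\<bar>} \<le> 2 * exp (1/2 - c)"
proof -
  have one_sided: "prob {\<omega> \<in> space M. c * \<sigma> \<le> s * f \<omega>} \<le> exp (1/2 - c)" if s: "\<bar>s\<bar> = 1" for s
  proof -
    have "emeasure M {\<omega> \<in> space M. c * \<sigma> \<le> s * f \<omega>}
        \<le> ennreal (exp (- (1/\<sigma>) * (c * \<sigma>)))
            * (\<integral>\<^sup>+\<omega>. ennreal (exp (1/\<sigma> * (s * f \<omega>))) * indicator (space M) \<omega> \<partial>M)"
      using \<sigma> by (intro Chernoff_ineq_nn_integral_ge) auto
    also have "(\<integral>\<^sup>+\<omega>. ennreal (exp (1/\<sigma> * (s * f \<omega>))) * indicator (space M) \<omega> \<partial>M)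
        = (\<integral>\<^sup>+\<omega>. ennreal (exp (s / \<sigma> * f \<omega>)) \<partial>M)"
      by (intro nn_integral_cong) simp
    also have "\<dots> \<le> ennreal (exp (1/2))"
      using mgf[of "s / \<sigma>"] s \<sigma> by (simp add: power_divide abs_square_eq_1[THEN iffD2])
    finally have "emeasure M {\<omega> \<in> space M. c * \<sigma> \<le> s * f \<omega>}
        \<le> ennreal (exp (- (1/\<sigma>) * (c * \<sigma>))) * ennreal (exp (1/2))"
      by (simp add: mult_left_mono)
    then have "emeasure M {\<omega> \<in> space M. c * \<sigma> \<le> s * f \<omega>} \<le> ennreal (exp (1/2 - c))"
      using \<sigma> by (simp add: ennreal_mult'[symmetric] mult_exp_exp)
    then show ?thesis by (simp add: emeasure_eq_measure)
  qed
  have "prob {\<omega> \<in> space M. c * \<sigma> < \<bar>f \<omega>\<bar>}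
      \<le> prob ({\<omega> \<in> space M. c * \<sigma> \<le> 1 * f \<omega>} \<union> {\<omega> \<in> space M. c * \<sigma> \<le> -1 * f \<omega>})"
    by (intro finite_measure_mono) auto
  also have "\<dots> \<le> prob {\<omega> \<in> space M. c * \<sigma> \<le> 1 * f \<omega>} + prob {\<omega> \<in> space M. c * \<sigma> \<le> -1 * f \<omega>}"
    by (intro measure_Un_le) measurable
  also have "\<dots> \<le> 2 * exp (1/2 - c)"
    using one_sided[of 1] one_sided[of "-1"] by simp
  finally show ?thesis .
qed

text \<open>Since \<open>cosh\<close> is even and increasing on \<open>[0, \<infinity>)\<close>, \<open>cosh (l * max t 0) \<le> cosh (l * t)\<close>:
  conditionally on the weights, the ReLU only lowers the moment generating function.\<close>

lemma nn_integral_exp_relu_net_signs_le: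
  "(\<integral>\<^sup>+a. ennreal (exp (l * relu_net m d a W x)) \<partial>rademacher_vec m)
     \<le> (\<integral>\<^sup>+a. ennreal (exp (\<Sum>j<m. l * preact d W j x * a j)) \<partial>rademacher_vec m)"
proof -
  have "l * relu_net m d a W x = (\<Sum>j<m. l * max (preact d W j x) 0 * a j)" for a
    unfolding relu_net_def by (simp add: sum_distrib_left mult_ac)
  then have "(\<integral>\<^sup>+a. ennreal (exp (l * relu_net m d a W x)) \<partial>rademacher_vec m)
      = ennreal (\<Prod>j<m. cosh (l * max (preact d W j x) 0))"
    unfolding rademacher_vec_def by (simp add: nn_integral_exp_sum_rademacher)
  also have "\<dots> \<le> ennreal (\<Prod>j<m. cosh (l * preact d W j x))"
    by (intro ennreal_leI prod_mono) (auto simp: max_def cosh_real_ge_1)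
  also have "\<dots> = (\<integral>\<^sup>+a. ennreal (exp (\<Sum>j<m. l * preact d W j x * a j)) \<partial>rademacher_vec m)"
    unfolding rademacher_vec_def by (simp add: nn_integral_exp_sum_rademacher)
  finally show ?thesis .
qed

lemma nn_integral_exp_signed_preact_sum:
  "(\<integral>\<^sup>+W. ennreal (exp (\<Sum>j<m. l * preact d W j x * a j)) \<partial>gauss_mat m d)
     = ennreal (exp (l\<^sup>2 * (\<Sum>j<m. (a j)\<^sup>2) * (\<Sum>i<d. (x i)\<^sup>2) / 2))"
proof -
  have "(\<Sum>j<m. l * preact d W j x * a j) = (\<Sum>p\<in>{..<m} \<times> {..<d}. (l * a (fst p) * x (snd p)) * W p)"
    for W
    by (simp add: sum_distrib_left sum.cartesian_product algebra_simps split_def)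
  moreover have "(\<Sum>p\<in>{..<m} \<times> {..<d}. (l * a (fst p) * x (snd p))\<^sup>2 / 2)
      = l\<^sup>2 * (\<Sum>j<m. (a j)\<^sup>2) * (\<Sum>i<d. (x i)\<^sup>2) / 2"
    by (simp add: sum.cartesian_product split_def power_mult_distrib sum_divide_distrib[symmetric]
        sum_distrib_left sum_distrib_right mult_ac)
  ultimately show ?thesis
    unfolding gauss_mat_def by (simp add: nn_integral_exp_sum_gaussian)
qed

lemma nn_integral_exp_relu_net_le:
  "(\<integral>\<^sup>+\<omega>. ennreal (exp (l * relu_net m d (fst \<omega>) (snd \<omega>) x)) \<partial>init_measure m d)
     \<le> ennreal (exp (l\<^sup>2 * (sqrt (real m) * vec_norm d x)\<^sup>2 / 2))"
proof -
  interpret R: prob_space "rademacher_vec m" by (rule prob_space_rademacher_vec)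
  interpret G: prob_space "gauss_mat m d" by (rule prob_space_gauss_mat)
  interpret pair_sigma_finite "rademacher_vec m" "gauss_mat m d" ..
  let ?lin = "\<lambda>a W. \<Sum>j<m. l * preact d W j x * a j"
  have meas_relu: "(\<lambda>\<omega>. ennreal (exp (l * relu_net m d (fst \<omega>) (snd \<omega>) x)))
      \<in> borel_measurable (rademacher_vec m \<Otimes>\<^sub>M gauss_mat m d)"
    using measurable_relu_net[of m d x, unfolded init_measure_def] by measurable
  have meas_lin: "(\<lambda>\<omega>. ennreal (exp (?lin (fst \<omega>) (snd \<omega>))))
      \<in> borel_measurable (rademacher_vec m \<Otimes>\<^sub>M gauss_mat m d)"
    using measurable_signed_preact_sum[where m=m and d=d and l=l and x=x, unfolded init_measure_def] by measurable
  have "(\<integral>\<^sup>+\<omega>. ennreal (exp (l * relu_net m d (fst \<omega>) (snd \<omega>) x)) \<partial>init_measure m d)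
      = (\<integral>\<^sup>+W. \<integral>\<^sup>+a. ennreal (exp (l * relu_net m d a W x)) \<partial>rademacher_vec m \<partial>gauss_mat m d)"
    unfolding init_measure_def using nn_integral_snd[OF meas_relu] by simp
  also have "\<dots> \<le> (\<integral>\<^sup>+W. \<integral>\<^sup>+a. ennreal (exp (?lin a W)) \<partial>rademacher_vec m \<partial>gauss_mat m d)"
    by (intro nn_integral_mono nn_integral_exp_relu_net_signs_le)
  also have "\<dots> = (\<integral>\<^sup>+a. \<integral>\<^sup>+W. ennreal (exp (?lin a W)) \<partial>gauss_mat m d \<partial>rademacher_vec m)"
    using Fubini[OF meas_lin] by simp
  also have "\<dots> = (\<integral>\<^sup>+a. ennreal (exp (l\<^sup>2 * (\<Sum>j<m. (a j)\<^sup>2) * (\<Sum>i<d. (x i)\<^sup>2) / 2)) \<partial>rademacher_vec m)"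
    by (simp add: nn_integral_exp_signed_preact_sum)
  also have "\<dots> = (\<integral>\<^sup>+a. ennreal (exp (l\<^sup>2 * (sqrt (real m) * vec_norm d x)\<^sup>2 / 2)) \<partial>rademacher_vec m)"
  proof (intro nn_integral_cong_AE eventually_mono[OF AE_rademacher_vec_sign])
    fix a :: "nat \<Rightarrow> real" assume "\<forall>j<m. \<bar>a j\<bar> = 1"
    then have "(\<Sum>j<m. (a j)\<^sup>2) = real m" by (simp add: abs_square_eq_1[THEN iffD2])
    then show "ennreal (exp (l\<^sup>2 * (\<Sum>j<m. (a j)\<^sup>2) * (\<Sum>i<d. (x i)\<^sup>2) / 2))
        = ennreal (exp (l\<^sup>2 * (sqrt (real m) * vec_norm d x)\<^sup>2 / 2))"
      by (simp add: vec_norm_def power_mult_distrib sum_nonneg)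
  qed
  also have "\<dots> = ennreal (exp (l\<^sup>2 * (sqrt (real m) * vec_norm d x)\<^sup>2 / 2))"
    by (simp add: R.emeasure_space_1)
  finally show ?thesis .
qed

lemma prob_relu_net_tail:
  "measure (init_measure m d) {\<omega> \<in> space (init_measure m d).
      c * (sqrt (real m) * vec_norm d x) < \<bar>relu_net m d (fst \<omega>) (snd \<omega>) x\<bar>} \<le> 2 * exp (1/2 - c)"
proof (cases "sqrt (real m) * vec_norm d x = 0")
  case True
  have "relu_net m d a W x = 0" for a W
  proof -
    from True have "m = 0 \<or> (\<forall>i<d. x i = 0)" by (simp add: vec_norm_eq_0_iff)
    then show ?thesis by (elim disjE) (simp_all add: relu_net_def)
  qed
  then have empty: "{\<omega> \<in> space (init_measure m d).
      c * (sqrt (real m) * vec_norm d x) < \<bar>relu_net m d (fst \<omega>) (snd \<omega>) x\<bar>} = {}"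
    unfolding True by simp
  show ?thesis unfolding empty by simp
next
  case False
  then have "0 < sqrt (real m) * vec_norm d x"
    by (intro order_le_neq_trans) (auto simp: vec_norm_nonneg)
  from prob_space.subgaussian_tail[OF prob_space_init_measure measurable_relu_net this
      nn_integral_exp_relu_net_le]
  show ?thesis .
qed

lemma nn_integral_exp_init_weight:
  assumes p: "p \<in> {..<m} \<times> {..<d}"
  shows "(\<integral>\<^sup>+\<omega>. ennreal (exp (l * snd \<omega> p)) \<partial>init_measure m d) = ennreal (exp (l\<^sup>2 / 2))"
proof -
  interpret R: prob_space "rademacher_vec m" by (rule prob_space_rademacher_vec)
  interpret G: prob_space "gauss_mat m d" by (rule prob_space_gauss_mat)
  interpret pair_sigma_finite "rademacher_vec m" "gauss_mat m d" ..
  have meas: "(\<lambda>\<omega>. ennreal (exp (l * snd \<omega> p))) \<in> borel_measurable (rademacher_vec m \<Otimes>\<^sub>M gauss_mat m d)"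
    using measurable_init_weight[OF p, unfolded init_measure_def] by measurable
  have "(\<integral>\<^sup>+\<omega>. ennreal (exp (l * snd \<omega> p)) \<partial>init_measure m d)
      = (\<integral>\<^sup>+W. ennreal (exp (l * W p)) \<partial>gauss_mat m d)"
    unfolding init_measure_def using nn_integral_snd[OF meas] by (simp add: R.emeasure_space_1)
  also have "\<dots> = (\<integral>\<^sup>+t. ennreal (exp (l * t)) \<partial>distr (gauss_mat m d) std_normal_distribution (\<lambda>W. W p))"
    unfolding gauss_mat_def using p by (intro nn_integral_distr[symmetric]) auto
  also have "\<dots> = ennreal (exp (l\<^sup>2 / 2))"
    unfolding gauss_mat_def using p
    by (subst distr_PiM_component[where M = "\<lambda>_. std_normal_distribution"])
       (simp_all add: prob_space_std_normal_distribution nn_integral_exp_std_normal)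
  finally show ?thesis .
qed

lemma prob_init_weight_tail:
  assumes "p \<in> {..<m} \<times> {..<d}"
  shows "measure (init_measure m d) {\<omega> \<in> space (init_measure m d). c < \<bar>snd \<omega> p\<bar>} \<le> 2 * exp (1/2 - c)"
  using prob_space.subgaussian_tail[OF prob_space_init_measure measurable_init_weight[OF assms],
      of 1 c] by (simp add: nn_integral_exp_init_weight[OF assms])

lemma measurable_grad_f_entry:
  assumes "p \<in> {..<m} \<times> {..<d}"
  shows "(\<lambda>\<omega>. grad_f \<rho> m d (fst \<omega>) (snd \<omega>) x p) \<in> borel_measurable (init_measure m d)"
proof -
  obtain j k where p: "p = (j, k)" and j: "j < m" using assms by auto
  have "(\<lambda>\<omega>. grad_f \<rho> m d (fst \<omega>) (snd \<omega>) x p)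
      = (\<lambda>\<omega>. \<rho> / sqrt (real m) * fst \<omega> j * (if 0 \<le> preact d (snd \<omega>) j x then 1 else 0) * x k)"
    by (simp add: grad_f_def p)
  also have "\<dots> \<in> borel_measurable (init_measure m d)"
    using j by (intro borel_measurable_times measurable_If borel_measurable_le measurable_preact
        measurable_init_sign measurable_const) auto
  finally show ?thesis .
qed

lemma measurable_fro_norm_grad_f [measurable]:
  "(\<lambda>\<omega>. fro_norm m d (grad_f \<rho> m d (fst \<omega>) (snd \<omega>) x)) \<in> borel_measurable (init_measure m d)"
  unfolding fro_norm_def
  by (intro measurable_compose[OF _ borel_measurable_sqrt] borel_measurable_sum borel_measurable_power
      measurable_grad_f_entry) auto

lemma grad_inner_le_affine_dist:
  assumes \<rho>: "0 \<le> \<rho>" and a: "\<forall>j<m. \<bar>a j\<bar> \<le> 1" and c: "0 \<le> c"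
    and S: "\<bar>relu_net m d a W x\<bar> \<le> c * (sqrt (real m) * vec_norm d x)"
  shows "\<bar>frob_inner m d (grad_f \<rho> m d a W x) V\<bar>
           \<le> \<rho> * vec_norm d x * (fro_norm m d (\<lambda>jk. V jk - W jk) + c)"
proof -
  have "\<bar>\<rho> / sqrt (real m) * relu_net m d a W x\<bar> = \<rho> / sqrt (real m) * \<bar>relu_net m d a W x\<bar>"
    using \<rho> by (simp add: abs_mult)
  also have "\<dots> \<le> \<rho> / sqrt (real m) * (c * (sqrt (real m) * vec_norm d x))"
    using S \<rho> by (intro mult_left_mono) simp_all
  also have "\<dots> \<le> \<rho> * vec_norm d x * c"
    using \<rho> c by (cases "m = 0") (simp_all add: vec_norm_nonneg)
  finally have "fro_norm m d (grad_f \<rho> m d a W x) \<le> \<rho> * vec_norm d x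
      \<and> \<bar>frob_inner m d (grad_f \<rho> m d a W x) W\<bar> \<le> \<rho> * vec_norm d x * c"
    using fro_norm_grad_f_le[OF \<rho> a] by (simp add: frob_inner_grad_f_self)
  then show ?thesis
    using frob_inner_le_affine_dist_iff[OF mult_nonneg_nonneg[OF \<rho> vec_norm_nonneg] c] by blast
qed

lemma prob_relu_net_log_tail:
  assumes \<delta>: "0 < \<delta>"
  shows "measure (init_measure m d) {\<omega> \<in> space (init_measure m d).
           2 * ln (1 / \<delta>) * (sqrt (real m) * vec_norm d x) < \<bar>relu_net m d (fst \<omega>) (snd \<omega>) x\<bar>}
         \<le> 3 * \<delta>" (is "measure _ ?B \<le> _")
proof (cases "\<delta> \<le> 3/4")
  case True
  have "measure (init_measure m d) ?B \<le> 2 * exp (1/2 - 2 * ln (1 / \<delta>))"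
    by (rule prob_relu_net_tail)
  also have "exp (1/2 - 2 * ln (1 / \<delta>)) = exp (1/2) * \<delta>\<^sup>2"
  proof -
    have e: "1/2 - 2 * ln (1 / \<delta>) = 1/2 + ln \<delta> + ln \<delta>"
      using \<delta> by (simp add: ln_div)
    show ?thesis unfolding e exp_add exp_ln[OF \<delta>] by (simp add: power2_eq_square)
  qed
  also have "2 * (exp (1/2) * \<delta>\<^sup>2) \<le> 2 * (2 * \<delta>\<^sup>2)"
    using exp_bound_half[of "1/2 :: real"] by (intro mult_left_mono mult_right_mono) simp_all
  also have "\<dots> \<le> 3 * \<delta>"
    using True \<delta> mult_right_mono[of "4 * \<delta>" 3 \<delta>] by (simp add: power2_eq_square)
  finally show ?thesis .
next
  case False
  then show ?thesis
    using prob_space.prob_le_1[OF prob_space_init_measure, of m d ?B] by linarith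
qed

lemma prob_grad_inner_bound_fixed_input:
  assumes \<rho>: "0 < \<rho>" and \<delta>: "0 < \<delta>" "\<delta> < 1"
  shows "measure (init_measure m d)
           {\<omega> \<in> space (init_measure m d). \<forall>V.
              \<bar>frob_inner m d (grad_f \<rho> m d (fst \<omega>) (snd \<omega>) x) V\<bar>
                \<le> \<rho> * vec_norm d x * (fro_norm m d (\<lambda>jk. V jk - snd \<omega> jk) + 2 * ln (1 / \<delta>))}
         \<ge> 1 - 3 * \<delta>"
proof -
  interpret prob_space "init_measure m d" by (rule prob_space_init_measure)
  define c where "c = 2 * ln (1 / \<delta>)"
  have c: "0 \<le> c" unfolding c_def using \<delta> by simp
  let ?S = "\<lambda>\<omega>. relu_net m d (fst \<omega>) (snd \<omega>) x"
  let ?g = "\<lambda>\<omega>. grad_f \<rho> m d (fst \<omega>) (snd \<omega>) x"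
  let ?E = "{\<omega> \<in> space (init_measure m d). \<forall>V.
      \<bar>frob_inner m d (?g \<omega>) V\<bar> \<le> \<rho> * vec_norm d x * (fro_norm m d (\<lambda>jk. V jk - snd \<omega> jk) + c)}"
  let ?B = "{\<omega> \<in> space (init_measure m d). c * (sqrt (real m) * vec_norm d x) < \<bar>?S \<omega>\<bar>}"
  have "?E = {\<omega> \<in> space (init_measure m d). fro_norm m d (?g \<omega>) \<le> \<rho> * vec_norm d x
      \<and> \<bar>\<rho> / sqrt (real m) * ?S \<omega>\<bar> \<le> \<rho> * vec_norm d x * c}"
    using frob_inner_le_affine_dist_iff[OF _ c] \<rho> by (simp add: frob_inner_grad_f_self vec_norm_nonneg)
  then have "?E \<in> events" by simp
  moreover have "?B \<in> events" by measurable
  moreover have "AE \<omega> in init_measure m d. \<omega> \<notin> ?B \<longrightarrow> \<omega> \<in> ?E"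
    using \<rho> c by (intro eventually_mono[OF eventually_conj[OF AE_space AE_init_measure_sign]])
      (auto intro!: grad_inner_le_affine_dist simp: not_less)
  moreover have "prob ?B \<le> 3 * \<delta>"
    unfolding c_def using \<delta>(1) by (rule prob_relu_net_log_tail)
  ultimately have "1 - 3 * \<delta> \<le> prob ?E"
    by (rule prob_ge_one_minus_bad_event)
  then show ?thesis unfolding c_def by simp
qed

section \<open>Grids in the unit ball\<close>

definition round_toward_zero :: "real \<Rightarrow> int" where
  "round_toward_zero t = (if 0 \<le> t then \<lfloor>t\<rfloor> else - \<lfloor>- t\<rfloor>)"

lemma round_toward_zero_bounds:
  "\<bar>of_int (round_toward_zero t)\<bar> \<le> \<bar>t\<bar> \<and> \<bar>t - of_int (round_toward_zero t)\<bar> \<le> (1::real)"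
proof -
  have floor: "0 \<le> real_of_int \<lfloor>u\<rfloor> \<and> real_of_int \<lfloor>u\<rfloor> \<le> u \<and> u < real_of_int \<lfloor>u\<rfloor> + 1"
    if "0 \<le> u" for u :: real
    using that floor_correct[of u] by simp
  show ?thesis
  proof (cases "0 \<le> t")
    case True
    then show ?thesis using floor[of t] by (simp add: round_toward_zero_def; arith)
  next
    case False
    then show ?thesis using floor[of "- t"] by (simp add: round_toward_zero_def; arith)
  qed
qed

definition grid_round :: "nat \<Rightarrow> nat \<Rightarrow> (nat \<Rightarrow> real) \<Rightarrow> nat \<Rightarrow> real" where
  "grid_round K d x i = (if i < d then of_int (round_toward_zero (real K * x i)) / real K else 0)"

definition grid :: "nat \<Rightarrow> nat \<Rightarrow> (nat \<Rightarrow> real) set" where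
  "grid K d = (\<lambda>f i. if i < d then f i else 0) ` (PiE {..<d} (\<lambda>_. (\<lambda>j. of_int j / real K) ` {- int K..int K}))"

definition grid_points :: "nat \<Rightarrow> (nat \<Rightarrow> real) set" where
  "grid_points d = (\<Union>K. grid K d)"

lemma finite_grid: "finite (grid K d)"
  unfolding grid_def by (intro finite_imageI finite_PiE) auto

lemma card_grid_le: "card (grid K d) \<le> (2 * K + 1) ^ d"
proof -
  have "card (grid K d) \<le> card (PiE {..<d} (\<lambda>_. (\<lambda>j. of_int j / real K) ` {- int K..int K}))"
    unfolding grid_def by (intro card_image_le finite_PiE) auto
  also have "\<dots> = card ((\<lambda>j. of_int j / real K) ` {- int K..int K}) ^ d"
    by (simp add: card_PiE)
  also have "\<dots> \<le> card {- int K..int K} ^ d"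
    by (intro power_mono card_image_le) auto
  finally show ?thesis by (simp add: nat_add_distrib nat_mult_distrib)
qed

lemma countable_grid_points: "countable (grid_points d)"
  unfolding grid_points_def by (intro countable_UN[OF countableI_type] countable_finite finite_grid)

lemma abs_le_vec_norm: "i < d \<Longrightarrow> \<bar>x i\<bar> \<le> vec_norm d x"
  unfolding vec_norm_def by (rule real_le_rsqrt) (auto intro: member_le_sum)

lemma abs_grid_round_le: "\<bar>grid_round K d x i\<bar> \<le> \<bar>x i\<bar>"
proof (cases "i < d \<and> 0 < K")
  case True
  have "\<bar>grid_round K d x i\<bar> = \<bar>of_int (round_toward_zero (real K * x i))\<bar> / real K"
    using True by (simp add: grid_round_def abs_div)
  also have "\<dots> \<le> \<bar>real K * x i\<bar> / real K"
    using round_toward_zero_bounds by (intro divide_right_mono) auto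
  finally show ?thesis using True by (simp add: abs_mult)
qed (auto simp: grid_round_def)

lemma vec_norm_grid_round_le: "vec_norm d (grid_round K d x) \<le> vec_norm d x"
  unfolding vec_norm_def
  by (intro real_sqrt_le_mono sum_mono) (metis abs_grid_round_le abs_le_square_iff)

lemma abs_sub_grid_round_le:
  assumes "0 < K" and "i < d"
  shows "\<bar>x i - grid_round K d x i\<bar> \<le> 1 / real K"
proof -
  have "\<bar>x i - grid_round K d x i\<bar> = \<bar>real K * x i - of_int (round_toward_zero (real K * x i))\<bar> / real K"
    using assms by (simp add: grid_round_def abs_div field_simps)
  also have "\<dots> \<le> 1 / real K"
    using round_toward_zero_bounds by (intro divide_right_mono) auto
  finally show ?thesis .
qed

lemma grid_round_in_grid:
  assumes K: "0 < K" and x: "vec_norm d x \<le> 1"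
  shows "grid_round K d x \<in> grid K d"
proof -
  have "round_toward_zero (real K * x i) \<in> {- int K..int K}" if "i < d" for i
  proof -
    have "\<bar>of_int (round_toward_zero (real K * x i))\<bar> \<le> real K * \<bar>x i\<bar>"
      using round_toward_zero_bounds[of "real K * x i"] by (simp add: abs_mult)
    also have "\<dots> \<le> real K"
      using abs_le_vec_norm[OF that, of x] x by (simp add: mult_left_le)
    finally show ?thesis by auto
  qed
  then have "restrict (\<lambda>i. of_int (round_toward_zero (real K * x i)) / real K) {..<d}
      \<in> PiE {..<d} (\<lambda>_. (\<lambda>j. of_int j / real K) ` {- int K..int K})"
    by auto
  moreover have "grid_round K d x
      = (\<lambda>i. if i < d then restrict (\<lambda>i. of_int (round_toward_zero (real K * x i)) / real K) {..<d} i else 0)"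
    by (auto simp: grid_round_def)
  ultimately show ?thesis unfolding grid_def by blast
qed

lemma grid_round_in_grid_points: "0 < K \<Longrightarrow> vec_norm d x \<le> 1 \<Longrightarrow> grid_round K d x \<in> grid_points d"
  unfolding grid_points_def using grid_round_in_grid by blast

lemma grid_round_tendsto: "i < d \<Longrightarrow> (\<lambda>K. grid_round K d x i) \<longlonglongrightarrow> x i"
proof -
  assume i: "i < d"
  have "(\<lambda>K. x i - grid_round K d x i) \<longlonglongrightarrow> 0"
  proof (rule Lim_null_comparison[OF _ lim_1_over_n])
    show "\<forall>\<^sub>F K in sequentially. norm (x i - grid_round K d x i) \<le> 1 / real K"
      using abs_sub_grid_round_le[OF _ i] by (intro eventually_sequentiallyI[of 1]) auto
  qed
  from tendsto_diff[OF tendsto_const[of "x i"] this] show ?thesis by simp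
qed

section \<open>Reduction of a supremum to countably many conditions\<close>

definition coord_continuous :: "nat \<Rightarrow> ((nat \<Rightarrow> real) \<Rightarrow> real) \<Rightarrow> bool" where
  "coord_continuous d F \<longleftrightarrow> (\<forall>X x. (\<forall>i<d. (\<lambda>n. X n i) \<longlonglongrightarrow> x i) \<longrightarrow> (\<lambda>n. F (X n)) \<longlonglongrightarrow> F x)"

lemma coord_continuousD:
  "coord_continuous d F \<Longrightarrow> (\<And>i. i < d \<Longrightarrow> (\<lambda>n. X n i) \<longlonglongrightarrow> x i) \<Longrightarrow> (\<lambda>n. F (X n)) \<longlonglongrightarrow> F x"
  unfolding coord_continuous_def by blast

lemma coord_continuous_vec_norm: "coord_continuous d (vec_norm d)"
  unfolding coord_continuous_def vec_norm_def by (auto intro!: tendsto_intros)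

lemma coord_continuous_preact: "coord_continuous d (preact d W j)"
  unfolding coord_continuous_def by (auto intro!: tendsto_intros)

lemma convergent_subseq_of_bounded_coords:
  fixes X :: "nat \<Rightarrow> nat \<Rightarrow> real"
  assumes "\<And>n i. i < d \<Longrightarrow> \<bar>X n i\<bar> \<le> B"
  shows "\<exists>r l. strict_mono r \<and> (\<forall>i<d. (\<lambda>n. X (r n) i) \<longlonglongrightarrow> l i)"
  using assms
proof (induction d)
  case 0
  show ?case using strict_mono_id by blast
next
  case (Suc d)
  then obtain r l where r: "strict_mono r" and l: "\<forall>i<d. (\<lambda>n. X (r n) i) \<longlonglongrightarrow> l i"
    by force
  obtain f where f: "strict_mono f" and mono: "monoseq (\<lambda>n. X (r (f n)) d)"
    using seq_monosub[of "\<lambda>n. X (r n) d"] by blast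
  have "Bseq (\<lambda>n. X (r (f n)) d)"
    using Suc.prems by (intro BseqI'[of _ B]) simp
  then obtain L where L: "(\<lambda>n. X (r (f n)) d) \<longlonglongrightarrow> L"
    using Bseq_monoseq_convergent[OF _ mono] by (auto simp: convergent_def)
  have "(\<lambda>n. X ((r \<circ> f) n) i) \<longlonglongrightarrow> (l(d := L)) i" if "i < Suc d" for i
  proof (cases "i = d")
    case False
    then have "((\<lambda>n. X (r n) i) \<circ> f) \<longlonglongrightarrow> l i"
      using l f that by (intro LIMSEQ_subseq_LIMSEQ) auto
    then show ?thesis using False by (simp add: comp_def)
  qed (use L in simp)
  then show ?case using strict_mono_o[OF r f] by blast
qed

text \<open>Compactness: a bound on the compact set \<open>{x. \<parallel>x\<parallel> \<le> 1, g j x \<ge> 0}\<close> survives a small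
  relaxation of the constraints.\<close>

lemma relaxed_bound_of_bound:
  assumes F: "coord_continuous d F" and g: "\<forall>j\<in>J. coord_continuous d (g j)"
    and bound: "\<forall>x. vec_norm d x \<le> 1 \<longrightarrow> (\<forall>j\<in>J. 0 \<le> g j x) \<longrightarrow> F x \<le> C"
    and \<epsilon>: "0 < \<epsilon>"
  shows "\<exists>n. \<forall>y. vec_norm d y \<le> 1 \<longrightarrow> (\<forall>j\<in>J. - (1 / real (Suc n)) \<le> g j y) \<longrightarrow> F y \<le> C + \<epsilon>"
proof (rule ccontr)
  assume "\<not> ?thesis"
  then have "\<forall>n. \<exists>y. vec_norm d y \<le> 1 \<and> (\<forall>j\<in>J. - (1 / real (Suc n)) \<le> g j y) \<and> C + \<epsilon> < F y"
    by (auto simp: not_le)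
  from choice[OF this] obtain Y where
    Y: "\<And>n. vec_norm d (Y n) \<le> 1" "\<And>n. \<forall>j\<in>J. - (1 / real (Suc n)) \<le> g j (Y n)"
      "\<And>n. C + \<epsilon> < F (Y n)"
    by blast
  have "\<bar>Y n i\<bar> \<le> 1" if "i < d" for n i
    by (rule order_trans[OF abs_le_vec_norm[OF that] Y(1)])
  then obtain r l where r: "strict_mono r" and l: "\<forall>i<d. (\<lambda>n. Y (r n) i) \<longlonglongrightarrow> l i"
    using convergent_subseq_of_bounded_coords by blast
  have Fx: "(\<lambda>n. F (Y (r n))) \<longlonglongrightarrow> F l"
    by (rule coord_continuousD[OF F]) (use l in auto)
  have "(\<lambda>n. vec_norm d (Y (r n))) \<longlonglongrightarrow> vec_norm d l"
    by (rule coord_continuousD[OF coord_continuous_vec_norm]) (use l in auto)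
  then have "vec_norm d l \<le> 1"
    by (rule tendsto_upperbound) (simp_all add: Y(1))
  moreover have "0 \<le> g j l" if j: "j \<in> J" for j
  proof (rule tendsto_le[OF trivial_limit_sequentially])
    show "(\<lambda>n. g j (Y (r n))) \<longlonglongrightarrow> g j l"
      using g j l by (intro coord_continuousD[of d "g j" "\<lambda>n. Y (r n)" l]) auto
    show "(\<lambda>n. - (1 / real (Suc (r n)))) \<longlonglongrightarrow> 0"
      using LIMSEQ_subseq_LIMSEQ[OF tendsto_minus[OF LIMSEQ_Suc[OF lim_inverse_n']] r]
      by (simp add: comp_def)
    show "\<forall>\<^sub>F n in sequentially. - (1 / real (Suc (r n))) \<le> g j (Y (r n))"
      using Y(2) j by (intro always_eventually) blast
  qed
  ultimately have "F l \<le> C" using bound by blast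
  moreover have "C + \<epsilon> \<le> F l"
    by (rule tendsto_lowerbound[OF Fx]) (simp_all add: Y(3) less_imp_le)
  ultimately show False using \<epsilon> by linarith
qed

lemma bound_of_relaxed_grid_bound:
  assumes J: "finite J" and F: "coord_continuous d F" and g: "\<forall>j\<in>J. coord_continuous d (g j)"
    and relaxed: "\<forall>k. \<exists>n. \<forall>y\<in>grid_points d. vec_norm d y \<le> 1 \<longrightarrow>
                     (\<forall>j\<in>J. - (1 / real (Suc n)) \<le> g j y) \<longrightarrow> F y \<le> C + 1 / real (Suc k)"
    and x: "vec_norm d x \<le> 1" and gx: "\<forall>j\<in>J. 0 \<le> g j x"
  shows "F x \<le> C"
proof -
  define Y where "Y K = grid_round (Suc K) d x" for K
  have Y: "\<forall>i<d. (\<lambda>K. Y K i) \<longlonglongrightarrow> x i"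
    unfolding Y_def using LIMSEQ_Suc[OF grid_round_tendsto] by blast
  have bound: "F x \<le> C + 1 / real (Suc k)" for k
  proof -
    obtain n where n: "\<forall>y\<in>grid_points d. vec_norm d y \<le> 1 \<longrightarrow>
        (\<forall>j\<in>J. - (1 / real (Suc n)) \<le> g j y) \<longrightarrow> F y \<le> C + 1 / real (Suc k)"
      using relaxed by blast
    have "\<forall>j\<in>J. \<forall>\<^sub>F K in sequentially. - (1 / real (Suc n)) < g j (Y K)"
    proof (intro ballI order_tendstoD(1))
      fix j assume j: "j \<in> J"
      show "(\<lambda>K. g j (Y K)) \<longlonglongrightarrow> g j x"
        using g j Y by (intro coord_continuousD[of d "g j" Y x]) auto
      show "- (1 / real (Suc n)) < g j x"
        by (rule less_le_trans[of _ 0]) (use gx j in auto)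
    qed
    then have "\<forall>\<^sub>F K in sequentially. \<forall>j\<in>J. - (1 / real (Suc n)) < g j (Y K)"
      by (rule eventually_ball_finite[OF J])
    then have "\<forall>\<^sub>F K in sequentially. F (Y K) \<le> C + 1 / real (Suc k)"
    proof (rule eventually_mono)
      fix K assume "\<forall>j\<in>J. - (1 / real (Suc n)) < g j (Y K)"
      moreover have "Y K \<in> grid_points d"
        unfolding Y_def using x by (intro grid_round_in_grid_points) auto
      moreover have "vec_norm d (Y K) \<le> 1"
        unfolding Y_def using x vec_norm_grid_round_le[of d "Suc K" x] by linarith
      ultimately show "F (Y K) \<le> C + 1 / real (Suc k)"
        using n by (simp add: less_imp_le)
    qed
    then show ?thesis
      using Y by (intro tendsto_upperbound[OF coord_continuousD[OF F, of Y x]]) auto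
  qed
  have "(\<lambda>k. C + 1 / real (Suc k)) \<longlonglongrightarrow> C + 0"
    by (intro tendsto_add tendsto_const LIMSEQ_Suc[OF lim_inverse_n'])
  then have "F x \<le> C + 0"
    by (rule LIMSEQ_le_const) (use bound in blast)
  then show ?thesis by simp
qed

lemma bound_iff_relaxed_grid_bound:
  assumes J: "finite J" and F: "coord_continuous d F" and g: "\<forall>j\<in>J. coord_continuous d (g j)"
  shows "(\<forall>x. vec_norm d x \<le> 1 \<longrightarrow> (\<forall>j\<in>J. 0 \<le> g j x) \<longrightarrow> F x \<le> C)
     \<longleftrightarrow> (\<forall>k. \<exists>n. \<forall>y\<in>grid_points d. vec_norm d y \<le> 1 \<longrightarrow>
            (\<forall>j\<in>J. - (1 / real (Suc n)) \<le> g j y) \<longrightarrow> F y \<le> C + 1 / real (Suc k))"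
proof
  assume bound: "\<forall>x. vec_norm d x \<le> 1 \<longrightarrow> (\<forall>j\<in>J. 0 \<le> g j x) \<longrightarrow> F x \<le> C"
  show "\<forall>k. \<exists>n. \<forall>y\<in>grid_points d. vec_norm d y \<le> 1 \<longrightarrow>
      (\<forall>j\<in>J. - (1 / real (Suc n)) \<le> g j y) \<longrightarrow> F y \<le> C + 1 / real (Suc k)"
  proof
    fix k
    obtain n where "\<forall>y. vec_norm d y \<le> 1 \<longrightarrow> (\<forall>j\<in>J. - (1 / real (Suc n)) \<le> g j y)
        \<longrightarrow> F y \<le> C + 1 / real (Suc k)"
      using relaxed_bound_of_bound[OF F g bound, of "1 / real (Suc k)"] by auto
    then show "\<exists>n. \<forall>y\<in>grid_points d. vec_norm d y \<le> 1 \<longrightarrow>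
        (\<forall>j\<in>J. - (1 / real (Suc n)) \<le> g j y) \<longrightarrow> F y \<le> C + 1 / real (Suc k)"
      by blast
  qed
next
  assume "\<forall>k. \<exists>n. \<forall>y\<in>grid_points d. vec_norm d y \<le> 1 \<longrightarrow>
      (\<forall>j\<in>J. - (1 / real (Suc n)) \<le> g j y) \<longrightarrow> F y \<le> C + 1 / real (Suc k)"
  from bound_of_relaxed_grid_bound[OF J F g this]
  show "\<forall>x. vec_norm d x \<le> 1 \<longrightarrow> (\<forall>j\<in>J. 0 \<le> g j x) \<longrightarrow> F x \<le> C"
    by blast
qed

text \<open>For \<open>J = active_units m d W x\<close>, \<open>\<rho> / sqrt m * pattern_bound m d R a W x J\<close> is the supremum
  of \<open>\<bar>\<langle>\<nabla>f(x;W), V\<rangle>\<bar>\<close> over \<open>\<parallel>V - W\<parallel> \<le> R\<close>. For a fixed pattern \<open>J\<close> it is continuous in \<open>x\<close>,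
  whereas the active set is not.\<close>

definition pattern_bound ::
    "nat \<Rightarrow> nat \<Rightarrow> real \<Rightarrow> (nat \<Rightarrow> real) \<Rightarrow> (nat \<times> nat \<Rightarrow> real) \<Rightarrow> (nat \<Rightarrow> real) \<Rightarrow> nat set \<Rightarrow> real"
  where "pattern_bound m d R a W x J = \<bar>relu_net m d a W x\<bar> + R * vec_norm d x * sqrt (\<Sum>j\<in>J. (a j)\<^sup>2)"

lemma pattern_bound_mono:
  assumes "J \<subseteq> J'" and "finite J'" and "0 \<le> R"
  shows "pattern_bound m d R a W x J \<le> pattern_bound m d R a W x J'"
proof -
  have "sqrt (\<Sum>j\<in>J. (a j)\<^sup>2) \<le> sqrt (\<Sum>j\<in>J'. (a j)\<^sup>2)"
    using assms by (simp add: sum_mono2)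
  then show ?thesis
    unfolding pattern_bound_def using assms(3) by (simp add: mult_left_mono vec_norm_nonneg)
qed

lemma coord_continuous_pattern_bound: "coord_continuous d (\<lambda>x. pattern_bound m d R a W x J)"
  unfolding coord_continuous_def pattern_bound_def relu_net_def vec_norm_def
  by (auto intro!: tendsto_intros)

lemma ball_grad_inner_bound_iff:
  assumes \<rho>: "0 < \<rho>" and m: "0 < m" and R: "0 < R"
  shows "(\<forall>V. fro_norm m d (\<lambda>jk. V jk - W jk) \<le> R \<longrightarrow> \<bar>frob_inner m d (grad_f \<rho> m d a W x) V\<bar> \<le> C)
     \<longleftrightarrow> pattern_bound m d R a W x (active_units m d W x) \<le> C * sqrt (real m) / \<rho>"
proof -
  have "\<bar>frob_inner m d (grad_f \<rho> m d a W x) W\<bar> + R * fro_norm m d (grad_f \<rho> m d a W x)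
      = \<rho> / sqrt (real m) * pattern_bound m d R a W x (active_units m d W x)"
    using \<rho> by (simp add: frob_inner_grad_f_self fro_norm_grad_f pattern_bound_def abs_mult algebra_simps)
  moreover have "\<rho> / sqrt (real m) * pattern_bound m d R a W x (active_units m d W x) \<le> C
      \<longleftrightarrow> pattern_bound m d R a W x (active_units m d W x) \<le> C * sqrt (real m) / \<rho>"
    using \<rho> m by (simp add: field_simps)
  ultimately show ?thesis
    by (simp add: frob_inner_le_on_ball_iff[OF R])
qed

lemma uniform_grad_inner_bound_iff_patterns:
  assumes \<rho>: "0 < \<rho>" and m: "0 < m" and R: "0 < R"
  shows "(\<forall>V x. fro_norm m d (\<lambda>jk. V jk - W jk) \<le> R \<longrightarrow> vec_norm d x \<le> 1 \<longrightarrow>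
            \<bar>frob_inner m d (grad_f \<rho> m d a W x) V\<bar> \<le> C)
     \<longleftrightarrow> (\<forall>J\<in>Pow {..<m}. \<forall>x. vec_norm d x \<le> 1 \<longrightarrow> (\<forall>j\<in>J. 0 \<le> preact d W j x) \<longrightarrow>
            pattern_bound m d R a W x J \<le> C * sqrt (real m) / \<rho>)"
proof -
  have "active_units m d W x \<in> Pow {..<m}" "\<forall>j\<in>active_units m d W x. 0 \<le> preact d W j x" for x
    by (auto simp: active_units_def)
  moreover have "pattern_bound m d R a W x J \<le> pattern_bound m d R a W x (active_units m d W x)"
    if "J \<in> Pow {..<m}" "\<forall>j\<in>J. 0 \<le> preact d W j x" for J x
    using that R by (intro pattern_bound_mono) (auto simp: active_units_def)
  ultimately show ?thesis
    using ball_grad_inner_bound_iff[OF assms] by (meson order_trans)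
qed

lemma uniform_grad_inner_bound_iff_countable:
  assumes \<rho>: "0 < \<rho>" and m: "0 < m" and R: "0 < R"
  shows "(\<forall>V x. fro_norm m d (\<lambda>jk. V jk - W jk) \<le> R \<longrightarrow> vec_norm d x \<le> 1 \<longrightarrow>
            \<bar>frob_inner m d (grad_f \<rho> m d a W x) V\<bar> \<le> C)
     \<longleftrightarrow> (\<forall>J\<in>Pow {..<m}. \<forall>k. \<exists>n. \<forall>y\<in>grid_points d. vec_norm d y \<le> 1 \<longrightarrow>
            (\<forall>j\<in>J. - (1 / real (Suc n)) \<le> preact d W j y) \<longrightarrow>
            pattern_bound m d R a W y J \<le> C * sqrt (real m) / \<rho> + 1 / real (Suc k))"
proof -
  have pattern_iff: "(\<forall>x. vec_norm d x \<le> 1 \<longrightarrow> (\<forall>j\<in>J. 0 \<le> preact d W j x) \<longrightarrow>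
            pattern_bound m d R a W x J \<le> C * sqrt (real m) / \<rho>)
      \<longleftrightarrow> (\<forall>k. \<exists>n. \<forall>y\<in>grid_points d. vec_norm d y \<le> 1 \<longrightarrow>
            (\<forall>j\<in>J. - (1 / real (Suc n)) \<le> preact d W j y) \<longrightarrow>
            pattern_bound m d R a W y J \<le> C * sqrt (real m) / \<rho> + 1 / real (Suc k))"
    if "J \<in> Pow {..<m}" for J
  proof (rule bound_iff_relaxed_grid_bound[OF _ coord_continuous_pattern_bound])
    show "finite J" using that finite_subset[of J "{..<m}"] by auto
  qed (simp add: coord_continuous_preact)
  show ?thesis
    unfolding uniform_grad_inner_bound_iff_patterns[OF assms] by (rule ball_cong[OF refl], rule pattern_iff)
qed

lemma measurable_pattern_bound:
  assumes "J \<subseteq> {..<m}"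
  shows "(\<lambda>\<omega>. pattern_bound m d R (fst \<omega>) (snd \<omega>) y J) \<in> borel_measurable (init_measure m d)"
  unfolding pattern_bound_def using assms
  by (intro borel_measurable_add borel_measurable_abs measurable_relu_net borel_measurable_times
      measurable_const measurable_compose[OF _ borel_measurable_sqrt] borel_measurable_sum
      borel_measurable_power measurable_init_sign) auto

lemma sets_uniform_grad_inner_bound:
  assumes \<rho>: "0 < \<rho>" and m: "0 < m" and R: "0 < R"
  shows "{\<omega> \<in> space (init_measure m d). \<forall>V x. fro_norm m d (\<lambda>jk. V jk - snd \<omega> jk) \<le> R \<longrightarrow>
            vec_norm d x \<le> 1 \<longrightarrow> \<bar>frob_inner m d (grad_f \<rho> m d (fst \<omega>) (snd \<omega>) x) V\<bar> \<le> C}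
         \<in> sets (init_measure m d)"
  unfolding uniform_grad_inner_bound_iff_countable[OF assms]
proof (intro sets.sets_Collect_countable_All' sets.sets_Collect_countable_All
    sets.sets_Collect_countable_Ex sets.sets_Collect_imp sets.sets_Collect_const)
  fix J k n y assume J: "J \<in> Pow {..<m}"
  then show "{\<omega> \<in> space (init_measure m d). pattern_bound m d R (fst \<omega>) (snd \<omega>) y J
      \<le> C * sqrt (real m) / \<rho> + 1 / real (Suc k)} \<in> sets (init_measure m d)"
    by (intro borel_measurable_le measurable_pattern_bound measurable_const) auto
  fix j assume "j \<in> J"
  then show "{\<omega> \<in> space (init_measure m d). - (1 / real (Suc n)) \<le> preact d (snd \<omega>) j y}
      \<in> sets (init_measure m d)"
    using J by (intro borel_measurable_le measurable_preact measurable_const) auto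
next
  fix J assume "J \<in> Pow {..<m}"
  then show "countable J" by (auto intro: countable_finite finite_subset)
qed (auto intro: countable_finite countable_grid_points)

section \<open>Uniformly over inputs and parameters\<close>

lemma abs_relu_net_le_of_grid_bound:
  assumes K: "0 < K" and a: "\<forall>j<m. \<bar>a j\<bar> \<le> 1"
    and W: "\<forall>p\<in>{..<m} \<times> {..<d}. \<bar>W p\<bar> \<le> M"
    and net: "\<forall>y\<in>grid K d. \<bar>relu_net m d a W y\<bar> \<le> c * (sqrt (real m) * vec_norm d y)"
    and c: "0 \<le> c" and x: "vec_norm d x \<le> 1"
  shows "\<bar>relu_net m d a W x\<bar> \<le> c * sqrt (real m) + real m * real d * M / real K"
proof -
  define y where "y = grid_round K d x"
  have "\<bar>relu_net m d a W y\<bar> \<le> c * (sqrt (real m) * vec_norm d y)"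
    using net grid_round_in_grid[OF K x] by (simp add: y_def)
  also have "\<dots> \<le> c * sqrt (real m)"
  proof (rule mult_left_mono[OF _ c])
    have "vec_norm d y \<le> 1"
      using x vec_norm_grid_round_le[of d K x] by (simp add: y_def)
    then show "sqrt (real m) * vec_norm d y \<le> sqrt (real m)"
      by (simp add: mult_left_le)
  qed
  finally have y_bound: "\<bar>relu_net m d a W y\<bar> \<le> c * sqrt (real m)" .
  have "\<bar>relu_net m d a W x - relu_net m d a W y\<bar> \<le> (\<Sum>j<m. \<Sum>i<d. \<bar>W (j, i)\<bar> * \<bar>x i - y i\<bar>)"
    by (rule relu_net_lipschitz[OF a])
  also have "\<dots> \<le> (\<Sum>j<m. \<Sum>i<d. M * (1 / real K))"
    using W abs_sub_grid_round_le[OF K] by (intro sum_mono mult_mono)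
      (auto simp: y_def intro: order_trans[OF abs_ge_zero])
  finally show ?thesis using y_bound by simp
qed

lemma grad_inner_le_of_grid_bound:
  assumes \<rho>: "0 \<le> \<rho>" and m: "0 < m" and K: "0 < K" and a: "\<forall>j<m. \<bar>a j\<bar> \<le> 1"
    and W: "\<forall>p\<in>{..<m} \<times> {..<d}. \<bar>W p\<bar> \<le> M"
    and net: "\<forall>y\<in>grid K d. \<bar>relu_net m d a W y\<bar> \<le> c * (sqrt (real m) * vec_norm d y)"
    and c: "0 \<le> c" and x: "vec_norm d x \<le> 1" and V: "fro_norm m d (\<lambda>jk. V jk - W jk) \<le> R"
  shows "\<bar>frob_inner m d (grad_f \<rho> m d a W x) V\<bar> \<le> \<rho> * R + \<rho> * c + \<rho> * (sqrt (real m) * real d / real K) * M"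
proof -
  let ?g = "grad_f \<rho> m d a W x"
  have "fro_norm m d ?g \<le> \<rho>"
    using fro_norm_grad_f_le[OF \<rho> a, of d W x] x \<rho> by (simp add: mult_left_le order_trans)
  then have "fro_norm m d ?g * fro_norm m d (\<lambda>jk. V jk - W jk) \<le> \<rho> * R"
    using V \<rho> by (intro mult_mono) (simp_all add: fro_norm_nonneg)
  moreover have "\<bar>frob_inner m d ?g W\<bar> = \<rho> / sqrt (real m) * \<bar>relu_net m d a W x\<bar>"
    unfolding frob_inner_grad_f_self using \<rho> by (simp add: abs_mult)
  moreover have "\<dots> \<le> \<rho> / sqrt (real m) * (c * sqrt (real m) + real m * real d * M / real K)"
    by (rule mult_left_mono[OF abs_relu_net_le_of_grid_bound[OF K a W net c x]]) (simp add: \<rho>)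
  moreover have "\<rho> / sqrt (real m) * (c * sqrt (real m) + real m * real d * M / real K)
      = \<rho> * c + \<rho> * (sqrt (real m) * real d / real K) * M"
    using m by (simp add: field_simps real_div_sqrt)
  ultimately show ?thesis
    using abs_frob_inner_le_dist[of m d ?g V W] by linarith
qed

lemma three_pow_le_six_mult_pow: "0 < d \<Longrightarrow> (3::real) ^ d \<le> 6 * real d ^ d"
proof -
  assume d: "0 < d"
  consider "d = 1" | "d = 2" | "3 \<le> d" using d by linarith
  then show ?thesis
  proof cases
    case 3
    then have "(3::real) ^ d \<le> real d ^ d" by (intro power_mono) auto
    moreover have "0 \<le> real d ^ d" by simp
    ultimately show ?thesis by linarith
  qed (simp_all add: power2_eq_square)
qed

lemma grid_resolution:
  assumes m: "0 < m" and d: "0 < d"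
  defines "K \<equiv> nat \<lceil>sqrt (real m) * real d / 5\<rceil>"
  shows "0 < K" and "sqrt (real m) * real d / real K \<le> 5"
    and "real ((2 * K + 1) ^ d) \<le> 6 * (real m * real d powr (3/2)) ^ d"
proof -
  define u where "u = sqrt (real m) * real d"
  define B where "B = real m * real d powr (3/2)"
  have u: "1 \<le> u" unfolding u_def using m d by (intro mult_ge1_I) auto
  have K_ge: "u / 5 \<le> real K" and K_less: "real K < u / 5 + 1"
    unfolding K_def u_def[symmetric] using u ceiling_correct[of "u / 5"] by auto
  show K: "0 < K" using K_ge u by (cases K) auto
  show "sqrt (real m) * real d / real K \<le> 5"
    using K_ge K unfolding u_def[symmetric] by (simp add: field_simps)
  have "real d powr (3/2) = real d powr (1 + 1/2)"
    by simp
  also have "\<dots> = real d powr 1 * real d powr (1/2)"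
    by (rule powr_add)
  also have "\<dots> = real d * sqrt (real d)"
    using d by (simp add: powr_half_sqrt)
  finally have B1: "B = u * (sqrt (real m) * sqrt (real d))" and B2: "B = real d * (real m * sqrt (real d))"
    unfolding B_def u_def using m by (simp_all add: mult_ac)
  have "u * 1 \<le> u * (sqrt (real m) * sqrt (real d))"
    using u m d by (intro mult_left_mono mult_ge1_I) auto
  then have uB: "u \<le> B" by (simp add: B1)
  have "real d * 1 \<le> real d * (real m * sqrt (real d))"
    using m d by (intro mult_left_mono mult_ge1_I) auto
  then have dB: "real d \<le> B" by (simp add: B2)
  show "real ((2 * K + 1) ^ d) \<le> 6 * B ^ d"
  proof (cases "K = 1")
    case True
    have "(3::real) ^ d \<le> 6 * real d ^ d" by (rule three_pow_le_six_mult_pow[OF d])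
    also have "\<dots> \<le> 6 * B ^ d" using dB by (simp add: power_mono)
    finally show ?thesis using True by simp
  next
    case False
    then have "2 \<le> K" using K by simp
    then have "2 * real K + 1 \<le> B" using K_less uB by simp
    then have "(2 * real K + 1) ^ d \<le> B ^ d" by (rule power_mono) simp
    also have "\<dots> \<le> 6 * B ^ d" using uB u by simp
    finally show ?thesis by (simp add: add.commute)
  qed
qed

lemma grid_bound_constant_le:
  assumes \<rho>: "0 < \<rho>" and R: "1 \<le> R" and m: "0 < m" and d: "0 < d" and \<delta>: "0 < \<delta>" "\<delta> < 1"
    and r: "0 \<le> r" "r \<le> 5"
  shows "\<rho> * R + \<rho> * (ln (1 / \<delta>) + 4) + \<rho> * r * (ln (2 * real m * real d / \<delta>) + 1/2)
         \<le> 18 * R * \<rho> * ln (exp 1 * real m * real d / \<delta>)"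
proof -
  define A where "A = ln (real m) + ln (real d) + ln (1 / \<delta>)"
  have A: "ln (1 / \<delta>) \<le> A" "0 \<le> A"
    unfolding A_def using m d \<delta> by simp_all
  have lhs: "ln (2 * real m * real d / \<delta>) = ln 2 + A" and rhs: "ln (exp 1 * real m * real d / \<delta>) = 1 + A"
    unfolding A_def using m d \<delta> by (simp_all add: ln_mult ln_div)
  have "ln (2::real) \<le> 1"
    using ln_le_minus_one[of 2] by simp
  then have "r * (ln 2 + A + 1/2) \<le> 5 * (A + 3/2)"
    using r A by (intro mult_mono) auto
  moreover have "A \<le> R * A"
    using R A by (simp add: mult_le_cancel_right1)
  ultimately have "R + (ln (1 / \<delta>) + 4) + r * (ln 2 + A + 1/2) \<le> 18 * R * (1 + A)"
    using R A by (simp add: algebra_simps)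
  then have "\<rho> * (R + (ln (1 / \<delta>) + 4) + r * (ln 2 + A + 1/2)) \<le> \<rho> * (18 * R * (1 + A))"
    using \<rho> by (intro mult_left_mono) auto
  then show ?thesis
    unfolding lhs rhs by (simp add: algebra_simps)
qed

lemma sets_large_init_weight:
  "{\<omega> \<in> space (init_measure m d). \<exists>p\<in>{..<m} \<times> {..<d}. M < \<bar>snd \<omega> p\<bar>} \<in> sets (init_measure m d)"
proof (intro sets.sets_Collect_finite_Ex finite_cartesian_product finite_lessThan)
  fix p assume "p \<in> {..<m} \<times> {..<d}"
  note measurable_init_weight[OF this, measurable]
  show "{\<omega> \<in> space (init_measure m d). M < \<bar>snd \<omega> p\<bar>} \<in> sets (init_measure m d)" by measurable
qed

lemma sets_large_relu_net_on_grid: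
  "{\<omega> \<in> space (init_measure m d).
      \<exists>y\<in>grid K d. c * (sqrt (real m) * vec_norm d y) < \<bar>relu_net m d (fst \<omega>) (snd \<omega>) y\<bar>}
     \<in> sets (init_measure m d)"
  by (intro sets.sets_Collect_finite_Ex finite_grid) measurable

lemma prob_large_init_weight:
  assumes m: "0 < m" and d: "0 < d" and \<delta>: "0 < \<delta>"
  shows "measure (init_measure m d) {\<omega> \<in> space (init_measure m d).
           \<exists>p\<in>{..<m} \<times> {..<d}. ln (2 * real m * real d / \<delta>) + 1/2 < \<bar>snd \<omega> p\<bar>} \<le> \<delta>"
proof -
  interpret prob_space "init_measure m d" by (rule prob_space_init_measure)
  let ?M = "ln (2 * real m * real d / \<delta>) + 1/2"
  let ?A = "\<lambda>p. {\<omega> \<in> space (init_measure m d). ?M < \<bar>snd \<omega> p\<bar>}"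
  have "{\<omega> \<in> space (init_measure m d). \<exists>p\<in>{..<m} \<times> {..<d}. ?M < \<bar>snd \<omega> p\<bar>}
      = (\<Union>p\<in>{..<m} \<times> {..<d}. ?A p)"
    by auto
  also have "prob \<dots> \<le> (\<Sum>p\<in>{..<m} \<times> {..<d}. prob (?A p))"
  proof (rule finite_measure_subadditive_finite)
    show "?A ` ({..<m} \<times> {..<d}) \<subseteq> events"
    proof (rule image_subsetI)
      fix p assume "p \<in> {..<m} \<times> {..<d}"
      note measurable_init_weight[OF this, measurable]
      show "?A p \<in> events" by measurable
    qed
  qed simp
  also have "\<dots> \<le> (\<Sum>p\<in>{..<m} \<times> {..<d}. 2 * exp (1/2 - ?M))"
    by (intro sum_mono prob_init_weight_tail)
  also have "2 * exp (1/2 - ?M) = \<delta> / (real m * real d)"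
    using m d \<delta> by (simp add: exp_minus)
  finally show ?thesis using m d by simp
qed

lemma prob_large_relu_net_on_grid:
  "measure (init_measure m d) {\<omega> \<in> space (init_measure m d).
      \<exists>y\<in>grid K d. c * (sqrt (real m) * vec_norm d y) < \<bar>relu_net m d (fst \<omega>) (snd \<omega>) y\<bar>}
     \<le> real (card (grid K d)) * (2 * exp (1/2 - c))"
proof -
  interpret prob_space "init_measure m d" by (rule prob_space_init_measure)
  let ?A = "\<lambda>y. {\<omega> \<in> space (init_measure m d).
      c * (sqrt (real m) * vec_norm d y) < \<bar>relu_net m d (fst \<omega>) (snd \<omega>) y\<bar>}"
  have "{\<omega> \<in> space (init_measure m d). \<exists>y\<in>grid K d.
      c * (sqrt (real m) * vec_norm d y) < \<bar>relu_net m d (fst \<omega>) (snd \<omega>) y\<bar>} = (\<Union>y\<in>grid K d. ?A y)"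
    by auto
  also have "prob \<dots> \<le> (\<Sum>y\<in>grid K d. prob (?A y))"
  proof (rule finite_measure_subadditive_finite[OF finite_grid])
    have "?A y \<in> events" for y by measurable
    then show "?A ` grid K d \<subseteq> events" by blast
  qed
  also have "\<dots> \<le> (\<Sum>y\<in>grid K d. 2 * exp (1/2 - c))"
    by (intro sum_mono prob_relu_net_tail)
  finally show ?thesis by simp
qed

lemma two_exp_half_minus_le:
  fixes \<delta> :: real
  assumes "0 < \<delta>"
  shows "2 * exp (1/2 - (ln (1 / \<delta>) + 4)) \<le> \<delta> / 2"
proof -
  have e: "1/2 - (ln (1 / \<delta>) + 4) = ln \<delta> + - (7/2)"
    using assms by (simp add: ln_div)
  have "4 \<le> exp (7/2 :: real)"
    using exp_ge_add_one_self[of "7/2 :: real"] by simp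
  then have "\<delta> * 4 \<le> \<delta> * exp (7/2)"
    using assms by (intro mult_left_mono) auto
  then show ?thesis
    unfolding e exp_add exp_ln[OF assms] exp_minus by (simp add: field_simps)
qed

lemma prob_large_relu_net_on_resolution_grid:
  assumes m: "0 < m" and d: "0 < d" and \<delta>: "0 < \<delta>"
  shows "measure (init_measure m d) {\<omega> \<in> space (init_measure m d).
           \<exists>y\<in>grid (nat \<lceil>sqrt (real m) * real d / 5\<rceil>) d.
             (ln (1 / \<delta>) + 4) * (sqrt (real m) * vec_norm d y) < \<bar>relu_net m d (fst \<omega>) (snd \<omega>) y\<bar>}
         \<le> 3 * (real m * real d powr (3/2)) ^ d * \<delta>"
proof -
  define K where "K = nat \<lceil>sqrt (real m) * real d / 5\<rceil>"
  define B where "B = real m * real d powr (3/2)"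
  have "real (card (grid K d)) \<le> real ((2 * K + 1) ^ d)"
    using card_grid_le[of K d] by (simp only: of_nat_le_iff)
  then have "real (card (grid K d)) * (2 * exp (1/2 - (ln (1 / \<delta>) + 4))) \<le> 6 * B ^ d * (\<delta> / 2)"
    using grid_resolution(3)[OF m d, folded K_def B_def] two_exp_half_minus_le[OF \<delta>]
    by (intro mult_mono) auto
  then show ?thesis
    using prob_large_relu_net_on_grid[of m d K "ln (1 / \<delta>) + 4"]
    unfolding K_def[symmetric] B_def[symmetric] by (simp add: mult_ac)
qed

lemma grad_inner_le_of_small_init:
  assumes \<rho>: "0 < \<rho>" and R: "1 \<le> R" and m: "0 < m" and d: "0 < d" and \<delta>: "0 < \<delta>" "\<delta> < 1"
    and a: "\<forall>j<m. \<bar>a j\<bar> \<le> 1"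
    and W: "\<forall>p\<in>{..<m} \<times> {..<d}. \<bar>W p\<bar> \<le> ln (2 * real m * real d / \<delta>) + 1/2"
    and net: "\<forall>y\<in>grid (nat \<lceil>sqrt (real m) * real d / 5\<rceil>) d.
                \<bar>relu_net m d a W y\<bar> \<le> (ln (1 / \<delta>) + 4) * (sqrt (real m) * vec_norm d y)"
    and x: "vec_norm d x \<le> 1" and V: "fro_norm m d (\<lambda>jk. V jk - W jk) \<le> R"
  shows "\<bar>frob_inner m d (grad_f \<rho> m d a W x) V\<bar> \<le> 18 * R * \<rho> * ln (exp 1 * real m * real d / \<delta>)"
proof -
  define K where "K = nat \<lceil>sqrt (real m) * real d / 5\<rceil>"
  note K = grid_resolution(1,2)[OF m d, folded K_def]
  have "\<bar>frob_inner m d (grad_f \<rho> m d a W x) V\<bar>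
      \<le> \<rho> * R + \<rho> * (ln (1 / \<delta>) + 4)
         + \<rho> * (sqrt (real m) * real d / real K) * (ln (2 * real m * real d / \<delta>) + 1/2)"
    using \<rho> \<delta> net unfolding K_def[symmetric]
    by (intro grad_inner_le_of_grid_bound[OF _ m K(1) a W _ _ x V]) auto
  also have "\<dots> \<le> 18 * R * \<rho> * ln (exp 1 * real m * real d / \<delta>)"
    using K(2) by (intro grid_bound_constant_le[OF \<rho> R m d \<delta>]) auto
  finally show ?thesis .
qed

lemma prob_grad_inner_uniform_bound:
  assumes m: "0 < m" and d: "0 < d" and \<rho>: "0 < \<rho>" and R: "1 \<le> R" and \<delta>: "0 < \<delta>" "\<delta> < 1"
  shows "measure (init_measure m d)
           {\<omega> \<in> space (init_measure m d). \<forall>V x.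
              fro_norm m d (\<lambda>jk. V jk - snd \<omega> jk) \<le> R \<longrightarrow> vec_norm d x \<le> 1 \<longrightarrow>
              \<bar>frob_inner m d (grad_f \<rho> m d (fst \<omega>) (snd \<omega>) x) V\<bar>
                \<le> 18 * R * \<rho> * ln (exp 1 * real m * real d / \<delta>)}
         \<ge> 1 - (1 + 3 * (real m * real d powr (3/2)) ^ d) * \<delta>"
proof -
  interpret prob_space "init_measure m d" by (rule prob_space_init_measure)
  define K where "K = nat \<lceil>sqrt (real m) * real d / 5\<rceil>"
  define B where "B = real m * real d powr (3/2)"
  define c where "c = ln (1 / \<delta>) + 4"
  define M where "M = ln (2 * real m * real d / \<delta>) + 1/2"
  let ?E = "{\<omega> \<in> space (init_measure m d). \<forall>V x.
      fro_norm m d (\<lambda>jk. V jk - snd \<omega> jk) \<le> R \<longrightarrow> vec_norm d x \<le> 1 \<longrightarrow>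
      \<bar>frob_inner m d (grad_f \<rho> m d (fst \<omega>) (snd \<omega>) x) V\<bar>
        \<le> 18 * R * \<rho> * ln (exp 1 * real m * real d / \<delta>)}"
  let ?large_weight = "{\<omega> \<in> space (init_measure m d). \<exists>p\<in>{..<m} \<times> {..<d}. M < \<bar>snd \<omega> p\<bar>}"
  let ?large_net = "{\<omega> \<in> space (init_measure m d).
      \<exists>y\<in>grid K d. c * (sqrt (real m) * vec_norm d y) < \<bar>relu_net m d (fst \<omega>) (snd \<omega>) y\<bar>}"
  have "?E \<in> events"
    using m \<rho> R by (intro sets_uniform_grad_inner_bound) auto
  moreover have "?large_weight \<union> ?large_net \<in> events"
    using sets_large_init_weight sets_large_relu_net_on_grid by blast
  moreover have "AE \<omega> in init_measure m d. \<omega> \<notin> ?large_weight \<union> ?large_net \<longrightarrow> \<omega> \<in> ?E"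
    using m d \<rho> R \<delta> unfolding K_def c_def M_def
    by (intro eventually_mono[OF eventually_conj[OF AE_space AE_init_measure_sign]])
       (auto simp: not_less intro!: grad_inner_le_of_small_init)
  moreover have "prob (?large_weight \<union> ?large_net) \<le> (1 + 3 * B ^ d) * \<delta>"
    using measure_Un_le[OF sets_large_init_weight sets_large_relu_net_on_grid, of m d M K c]
      prob_large_init_weight[OF m d \<delta>(1)] prob_large_relu_net_on_resolution_grid[OF m d \<delta>(1)]
    unfolding K_def B_def c_def M_def by (simp add: algebra_simps)
  ultimately have "1 - (1 + 3 * B ^ d) * \<delta> \<le> prob ?E"
    by (rule prob_ge_one_minus_bad_event)
  then show ?thesis unfolding B_def by simp
qed

theorem lemmaA6:
  fixes m d :: nat and \<rho> R\<^sub>V \<delta> :: real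
  assumes "0 < m" and "0 < d" and "0 < \<rho>"
    and "0 < R\<^sub>V" and "0 < \<delta>" and "\<delta> < 1"
  shows "(\<forall>x :: nat \<Rightarrow> real.
            measure (init_measure m d)
              {\<omega> \<in> space (init_measure m d).
                 \<forall>V :: nat \<times> nat \<Rightarrow> real.
                   \<bar>frob_inner m d (grad_f \<rho> m d (fst \<omega>) (snd \<omega>) x) V\<bar>
                     \<le> \<rho> * vec_norm d x *
                        (fro_norm m d (\<lambda>jk. V jk - snd \<omega> jk) + 2 * ln (1 / \<delta>))}
              \<ge> 1 - 3 * \<delta>)
       \<and> (1 \<le> R\<^sub>V \<longrightarrow> real m \<ge> ln (exp 1 * real m * real d) \<longrightarrow>
            measure (init_measure m d)
              {\<omega> \<in> space (init_measure m d).
                 \<forall>(V :: nat \<times> nat \<Rightarrow> real) (x :: nat \<Rightarrow> real).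
                   fro_norm m d (\<lambda>jk. V jk - snd \<omega> jk) \<le> R\<^sub>V \<longrightarrow> vec_norm d x \<le> 1 \<longrightarrow>
                   \<bar>frob_inner m d (grad_f \<rho> m d (fst \<omega>) (snd \<omega>) x) V\<bar>
                     \<le> 18 * R\<^sub>V * \<rho> * ln (exp 1 * real m * real d / \<delta>)}
              \<ge> 1 - (1 + 3 * (real m * real d powr (3/2)) ^ d) * \<delta>)"
  using prob_grad_inner_bound_fixed_input[OF assms(3,5,6)]
    prob_grad_inner_uniform_bound[OF assms(1-3) _ assms(5,6)]
  by blast

end
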